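(* Let $(P_n(x))_{n \ge 1}$ be a splitting sequence such that $P_1(x)$ is not a monomial. Then: (1) if $P_1(x)$ is nice, then for each $n \in \mathbb{N}$ the polynomial $P_n(x)$ is nice if and only if it is irreducible in $\mathbb{Z}[x]$; (2) if the binary string of $(P_n(x))_{n \ge 1}$ contains infinitely many copies of $S$, then $P_1(x)$ is nice (and hence, for each $n$, $P_n(x)$ is nice if and only if it is irreducible).
   Context: A polynomial in $\mathbb{Z}[x]$ is nice if it is irreducible in $\mathbb{Z}[x]$ and its leading and constant coefficients both lie in $\{\pm 1\}$. Splitting sequence of an irreducible $P \in \mathbb{Z}[x]$: a sequence $(P_n)_{n \ge 1}$ in $\mathbb{Z}[x]$ with $P_1 = P$ such that for each $n$: if $P_n$ is irreducible in $\mathbb{Z}[x]$, then $P_{n+1}(x) = P_n(x^2)$; if $P_n$ is reducible, then (as $n \ge 2$, $P_{n-1}$ is irreducible and $P_n(x) = P_{n-1}(x^2)$ factors in $\mathbb{Z}[x]$ as a product of exactly two irreducibles) $P_{n+1}$ is one of these two irreducible factors. Its binary string is $s_1 s_2 \ldots$ with $s_n = L$ if $P_n$ is irreducible and $s_n = S$ otherwise. *)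

theory Defs
  imports "HOL-Computational_Algebra.Polynomial_Factorial"
begin

definition nice :: "int poly \<Rightarrow> bool" where
  "nice p \<longleftrightarrow> irreducible p \<and> lead_coeff p \<in> {1, -1} \<and> coeff p 0 \<in> {1, -1}"

definition sq_subst :: "int poly \<Rightarrow> int poly" where
  "sq_subst p = pcompose p (monom 1 2)"

text \<open>Splitting sequence of an irreducible polynomial. The sequence is indexed by
n >= 1; the value at 0 is irrelevant.\<close>
definition splitting_sequence :: "(nat \<Rightarrow> int poly) \<Rightarrow> bool" where
  "splitting_sequence P \<longleftrightarrow>
     irreducible (P 1) \<and>
     (\<forall>n\<ge>1. (irreducible (P n) \<longrightarrow> P (Suc n) = sq_subst (P n)) \<and>
             (\<not> irreducible (P n) \<longrightarrow>
                (\<exists>Q R. irreducible Q \<and> irreducible R \<and> P n = Q * R \<and> P (Suc n) = Q)))"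

definition string_is_S :: "(nat \<Rightarrow> int poly) \<Rightarrow> nat \<Rightarrow> bool" where
  "string_is_S P n \<longleftrightarrow> \<not> irreducible (P n)"

end

theory Submission
  imports Defs
begin

(*
  Let P be irreducible with P(0) \<noteq> 0 and P(x^2) = Q R with Q, R irreducible. Then Q(-x) is a
  prime factor of Q(-x) R(-x) = Q R. It cannot divide Q: that would force Q(-x) = Q, hence also
  R(-x) = R, so Q and R would be polynomials in x^2 and P would factor. Thus R = u Q(-x) for a unit u,
  and |lead_coeff P|, |P(0)| are the squares of |lead_coeff Q|, |Q(0)|.

  Along a splitting sequence these two positive integers are therefore unchanged at each L and
  replaced by their square roots at each S; infinitely many S force them to be 1. The hypothesis
  P(0) \<noteq> 0 holds for P_1 because an irreducible non-monomial is not divisible by x, and it passes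
  to P(x^2) and to its factors, as do unit leading and constant coefficients, which gives part (1).
*)

lemma coeff_pcompose_monom:
  fixes p :: "'a::comm_semiring_1 poly"
  assumes "0 < k"
  shows "coeff (pcompose p (monom 1 k)) n = (if k dvd n then coeff p (n div k) else 0)"
proof (induction p arbitrary: n)
  case (pCons a p)
  show ?case
  proof (cases "n < k")
    case True
    with assms show ?thesis
      by (auto simp: pcompose_pCons coeff_monom_mult coeff_pCons dest: dvd_imp_le split: nat.split)
  next
    case False
    then have "k dvd n \<longleftrightarrow> k dvd n - k" and "n div k = Suc ((n - k) div k)"
      using assms by (auto simp: dvd_minus_self le_div_geq)
    moreover have "n \<noteq> 0"
      using False assms by simp
    ultimately show ?thesis
      using False by (auto simp: pcompose_pCons coeff_monom_mult pCons.IH coeff_pCons split: nat.split)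
  qed
qed simp

lemma coeff_sq_subst: "coeff (sq_subst p) n = (if even n then coeff p (n div 2) else 0)"
  by (simp add: sq_subst_def coeff_pcompose_monom)

lemma degree_sq_subst: "degree (sq_subst p) = 2 * degree p"
  by (simp add: sq_subst_def degree_pcompose degree_monom_eq)

lemma lead_coeff_sq_subst [simp]: "lead_coeff (sq_subst p) = lead_coeff p"
  by (simp add: degree_sq_subst coeff_sq_subst)

lemma coeff_0_sq_subst [simp]: "coeff (sq_subst p) 0 = coeff p 0"
  by (simp add: coeff_sq_subst)

lemma sq_subst_1 [simp]: "sq_subst 1 = 1"
  by (simp add: sq_subst_def pcompose_1)

lemma sq_subst_mult: "sq_subst (p * q) = sq_subst p * sq_subst q"
  by (simp add: sq_subst_def pcompose_mult)

lemma is_unit_sq_subst: "is_unit p \<Longrightarrow> is_unit (sq_subst p)"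
  by (metis dvdE dvdI sq_subst_1 sq_subst_mult)

lemma inj_sq_subst: "inj sq_subst"
proof (rule injI)
  fix p q
  assume "sq_subst p = sq_subst q"
  then have "coeff (sq_subst p) (2 * n) = coeff (sq_subst q) (2 * n)" for n
    by simp
  then show "p = q"
    by (intro poly_eqI) (simp add: coeff_sq_subst)
qed

definition poly_neg_x :: "'a::comm_ring_1 poly \<Rightarrow> 'a poly" where
  "poly_neg_x p = pcompose p [:0, -1:]"

lemma coeff_poly_neg_x: "coeff (poly_neg_x p) n = (-1) ^ n * coeff p n"
  by (simp add: poly_neg_x_def coeff_pcompose_linear)

lemma poly_neg_x_poly_neg_x [simp]: "poly_neg_x (poly_neg_x p) = p"
  by (rule poly_eqI) (simp add: coeff_poly_neg_x flip: power_mult_distrib)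

lemma poly_neg_x_1 [simp]: "poly_neg_x 1 = 1"
  by (simp add: poly_neg_x_def pcompose_1)

lemma poly_neg_x_mult: "poly_neg_x (p * q) = poly_neg_x p * poly_neg_x q"
  by (simp add: poly_neg_x_def pcompose_mult)

lemma degree_poly_neg_x [simp]: "degree (poly_neg_x p) = degree p"
  for p :: "'a::idom poly"
  by (simp add: poly_neg_x_def degree_pcompose)

lemma is_unit_poly_neg_x_iff [simp]: "is_unit (poly_neg_x p) \<longleftrightarrow> is_unit p"
proof -
  have "is_unit (poly_neg_x q)" if "is_unit q" for q :: "'a poly"
    using that by (metis dvdE dvdI poly_neg_x_1 poly_neg_x_mult)
  then show ?thesis
    by (metis poly_neg_x_poly_neg_x)
qed

lemma irreducible_poly_neg_x:
  fixes p :: "'a::idom_divide poly"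
  assumes "irreducible p"
  shows "irreducible (poly_neg_x p)"
proof (rule irreducibleI)
  show "poly_neg_x p \<noteq> 0"
    using assms by (metis irreducible_def poly_neg_x_poly_neg_x poly_neg_x_def pcompose_0)
  show "\<not> is_unit (poly_neg_x p)"
    using assms by (simp add: irreducible_not_unit)
  fix a b
  assume "poly_neg_x p = a * b"
  then have "p = poly_neg_x a * poly_neg_x b"
    by (metis poly_neg_x_mult poly_neg_x_poly_neg_x)
  then show "is_unit a \<or> is_unit b"
    using assms by (auto dest: irreducibleD)
qed

lemma poly_neg_x_sq_subst [simp]: "poly_neg_x (sq_subst p) = sq_subst p"
  by (rule poly_eqI) (simp add: coeff_poly_neg_x coeff_sq_subst)

lemma sq_subst_if_poly_neg_x_eq:
  assumes "poly_neg_x q = q"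
  obtains g where "q = sq_subst g"
proof
  have odd_coeff: "coeff q n = 0" if "odd n" for n
    using arg_cong[OF assms, of "\<lambda>p. coeff p n"] that by (simp add: coeff_poly_neg_x)
  define g where "g = Abs_poly (\<lambda>n. coeff q (2 * n))"
  have "coeff g = (\<lambda>n. coeff q (2 * n))"
    unfolding g_def by (rule coeff_Abs_poly[where n = "degree q"]) (simp add: coeff_eq_0)
  then show "q = sq_subst g"
    by (intro poly_eqI) (auto simp: coeff_sq_subst odd_coeff)
qed

lemma poly_neg_x_eq_if_dvd:
  fixes q :: "'a::idom_divide poly"
  assumes q: "irreducible q" and q0: "coeff q 0 \<noteq> 0" and dvd: "poly_neg_x q dvd q"
  shows "poly_neg_x q = q"
proof -
  obtain c where c: "q = poly_neg_x q * c"
    using dvd by (rule dvdE)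
  then have "is_unit c"
    using q irreducible_poly_neg_x[OF q] by (auto dest: irreducibleD irreducible_not_unit)
  then obtain u where u: "c = [:u:]"
    by (rule is_unit_polyE)
  with c have "coeff q 0 = coeff q 0 * u"
    by (metis coeff_mult_0 coeff_pCons_0 coeff_poly_neg_x mult_1 power_0)
  with q0 have "u = 1"
    by simp
  with c u show ?thesis
    by simp
qed

lemma sq_subst_factor_reflected:
  assumes P: "irreducible P" and P0: "coeff P 0 \<noteq> 0" and PQR: "sq_subst P = Q * R"
    and Q: "irreducible Q" and R: "irreducible R"
  obtains u where "is_unit u" and "R = smult u (poly_neg_x Q)"
proof -
  have Q0: "coeff Q 0 \<noteq> 0"
    using P0 PQR by (metis coeff_0_sq_subst coeff_mult_0 mult_zero_left)
  have neg_QR: "poly_neg_x Q * poly_neg_x R = Q * R"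
    using PQR by (metis poly_neg_x_mult poly_neg_x_sq_subst)
  have "prime_elem (poly_neg_x Q)"
    using Q by (simp add: irreducible_poly_neg_x irreducible_imp_prime_elem)
  moreover have "poly_neg_x Q dvd Q * R"
    using neg_QR by (metis dvd_triv_left)
  ultimately consider "poly_neg_x Q dvd Q" | "poly_neg_x Q dvd R"
    by (auto dest: prime_elem_dvd_multD)
  then show ?thesis
  proof cases
    case 1
    have neg_Q: "poly_neg_x Q = Q"
      using Q Q0 1 by (rule poly_neg_x_eq_if_dvd)
    with neg_QR Q have "poly_neg_x R = R"
      by auto
    with neg_Q obtain G H where "Q = sq_subst G" and "R = sq_subst H"
      by (metis sq_subst_if_poly_neg_x_eq)
    with PQR have "P = G * H"
      by (metis inj_sq_subst injD sq_subst_mult)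
    then have "is_unit Q \<or> is_unit R"
      using P \<open>Q = sq_subst G\<close> \<open>R = sq_subst H\<close> by (auto dest: irreducibleD is_unit_sq_subst)
    with Q R show ?thesis
      by (auto dest: irreducible_not_unit)
  next
    case 2
    then obtain c where c: "R = poly_neg_x Q * c"
      by (rule dvdE)
    then have "is_unit c"
      using R irreducible_poly_neg_x[OF Q] by (auto dest: irreducibleD irreducible_not_unit)
    then obtain u where "c = [:u:]" and "is_unit u"
      by (rule is_unit_polyE)
    with c show ?thesis
      using that by simp
  qed
qed

lemma sq_subst_factor_abs_coeffs:
  assumes "irreducible P" and "coeff P 0 \<noteq> 0" and PQR: "sq_subst P = Q * R"
    and "irreducible Q" and "irreducible R"
  shows "\<bar>lead_coeff P\<bar> = \<bar>lead_coeff Q\<bar> ^ 2" and "\<bar>coeff P 0\<bar> = \<bar>coeff Q 0\<bar> ^ 2"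
proof -
  obtain u where u: "\<bar>u\<bar> = 1" and R: "R = smult u (poly_neg_x Q)"
    using sq_subst_factor_reflected[OF assms] by auto
  have "lead_coeff P = lead_coeff Q * lead_coeff R" and "coeff P 0 = coeff Q 0 * coeff R 0"
    by (metis PQR lead_coeff_sq_subst lead_coeff_mult, metis PQR coeff_0_sq_subst coeff_mult_0)
  moreover have "u \<noteq> 0"
    using u by auto
  ultimately show "\<bar>lead_coeff P\<bar> = \<bar>lead_coeff Q\<bar> ^ 2" and "\<bar>coeff P 0\<bar> = \<bar>coeff Q 0\<bar> ^ 2"
    using u by (simp_all add: R coeff_poly_neg_x abs_mult power_abs power2_eq_square)
qed

lemma infinitely_many_square_roots_eq_1:
  fixes a :: "nat \<Rightarrow> int"
  assumes pos: "\<And>n. n \<ge> m \<Longrightarrow> a n \<ge> 1"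
    and root: "\<And>n. n \<ge> m \<Longrightarrow> S n \<Longrightarrow> a n = a (Suc n) ^ 2"
    and const: "\<And>n. n \<ge> m \<Longrightarrow> \<not> S n \<Longrightarrow> a (Suc n) = a n"
    and inf: "infinite {n. S n}"
  shows "a m = 1"
proof -
  have dec: "a (Suc n) \<le> a n" if "n \<ge> m" for n
  proof (cases "S n")
    case True
    have "a (Suc n) * 1 \<le> a (Suc n) * a (Suc n)"
      using pos[of "Suc n"] that by (intro mult_left_mono) auto
    with True that show ?thesis
      by (simp add: root power2_eq_square)
  qed (simp add: const that)
  obtain k where k: "k \<ge> m" and k_min: "\<And>n. n \<ge> m \<Longrightarrow> a k \<le> a n"
    using ex_has_least_nat[of "\<lambda>n. n \<ge> m" m "\<lambda>n. nat (a n)"] pos by fastforce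
  obtain j where j: "j \<ge> k" and "S j"
    using inf by (auto simp: infinite_nat_iff_unbounded_le)
  have "a (Suc j) ^ 2 = a j"
    using root j k \<open>S j\<close> by simp
  also have "\<dots> \<le> a k"
    using lift_Suc_antimono_le_ivl[of "{m..}" a k j] dec j k by force
  also have "\<dots> \<le> a (Suc j)"
    using k_min j k by simp
  finally have "a (Suc j) * a (Suc j) \<le> a (Suc j) * 1"
    by (simp add: power2_eq_square)
  then have "a k = 1"
    using pos[of "Suc j"] k_min[of "Suc j"] pos[OF k] j k by simp
  with k show ?thesis
  proof (induction m rule: inc_induct)
    case (step n)
    then show ?case
      using root const by (cases "S n") auto
  qed
qed

lemma coeff_0_nonzero_if_irreducible_not_monom:
  fixes p :: "'a::idom_divide poly"
  assumes irr: "irreducible p" and not_monom: "\<not> (\<exists>c k. p = monom c k)"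
  shows "coeff p 0 \<noteq> 0"
proof
  assume "coeff p 0 = 0"
  then obtain r where r: "p = [:0, 1:] * r"
    by (cases p) auto
  have "\<not> is_unit [:0, 1::'a:]"
    by (auto simp: is_unit_poly_iff)
  then have "is_unit r"
    using irreducibleD[OF irr r] by blast
  then obtain u where "r = [:u:]"
    by (rule is_unit_polyE)
  with r have "p = monom u 1"
    by (simp add: monom_Suc monom_0)
  with not_monom show False
    by blast
qed

lemma splitting_sequence_next:
  assumes "splitting_sequence P" and "n \<ge> 1"
  shows "P (Suc n) = sq_subst (P n) \<or> P (Suc n) dvd P n"
  using assms unfolding splitting_sequence_def by (metis dvd_triv_left)

lemma splitting_sequence_invariant:
  assumes "splitting_sequence P" and "I (P 1)"
    and sq: "\<And>p. I p \<Longrightarrow> I (sq_subst p)" and dvd: "\<And>p q. I q \<Longrightarrow> p dvd q \<Longrightarrow> I p"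
    and "n \<ge> 1"
  shows "I (P n)"
  using \<open>n \<ge> 1\<close>
proof (induction n rule: nat_induct_at_least)
  case (Suc n)
  then show ?case
    using splitting_sequence_next[OF assms(1) Suc.hyps] sq dvd by metis
qed (fact assms(2))

lemma splitting_sequence_split:
  assumes "splitting_sequence P" and "n \<ge> 1" and "string_is_S P (Suc n)"
  obtains R where "irreducible (P n)" and "P (Suc n) = sq_subst (P n)"
    and "P (Suc n) = P (Suc (Suc n)) * R"
    and "irreducible (P (Suc (Suc n)))" and "irreducible R"
proof -
  have "irreducible (P n)"
    using assms unfolding splitting_sequence_def string_is_S_def by (metis le_SucI)
  with assms that show ?thesis
    unfolding splitting_sequence_def string_is_S_def by (metis le_SucI)
qed

lemma splitting_sequence_nice_iff_irreducible:
  assumes sp: "splitting_sequence P" and "nice (P 1)" and "n \<ge> 1"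
  shows "nice (P n) \<longleftrightarrow> irreducible (P n)"
proof -
  have "is_unit (lead_coeff (P n)) \<and> is_unit (coeff (P n) 0)"
  proof (rule splitting_sequence_invariant[OF sp _ _ _ \<open>n \<ge> 1\<close>])
    show "is_unit (lead_coeff (P 1)) \<and> is_unit (coeff (P 1) 0)"
      using \<open>nice (P 1)\<close> by (auto simp: nice_def)
  next
    fix p q :: "int poly"
    assume units: "is_unit (lead_coeff q) \<and> is_unit (coeff q 0)" and "p dvd q"
    from \<open>p dvd q\<close> obtain r where "q = p * r" ..
    with units show "is_unit (lead_coeff p) \<and> is_unit (coeff p 0)"
      by (simp add: lead_coeff_mult coeff_mult_0 is_unit_mult_iff del: zdvd1_eq)
  qed simp
  then show ?thesis
    by (auto simp: nice_def abs_if split: if_splits)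
qed

lemma splitting_sequence_unit_coeffs_if_infinite_S:
  assumes sp: "splitting_sequence P" and P0: "coeff (P 1) 0 \<noteq> 0"
    and inf: "infinite {n. n \<ge> 1 \<and> string_is_S P n}"
  shows "\<bar>lead_coeff (P 1)\<bar> = 1" and "\<bar>coeff (P 1) 0\<bar> = 1"
proof -
  define a where "a n = \<bar>lead_coeff (P n) * coeff (P n) 0\<bar>" for n
  have coeff_0: "coeff (P n) 0 \<noteq> 0" if "n \<ge> 1" for n
    using splitting_sequence_invariant[where I = "\<lambda>p. coeff p 0 \<noteq> 0", OF sp P0 _ _ that]
    by (metis coeff_0_sq_subst coeff_mult_0 dvdE mult_zero_left)
  have "a 1 = 1"
  proof (rule infinitely_many_square_roots_eq_1)
    show "a n \<ge> 1" if "n \<ge> 1" for n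
      using coeff_0[OF that] by (auto simp: a_def int_one_le_iff_zero_less)
    show "a n = a (Suc n) ^ 2" if "n \<ge> 1" and S: "string_is_S P n" for n
    proof -
      have "n \<noteq> 1"
        using S sp by (auto simp: splitting_sequence_def string_is_S_def)
      with \<open>n \<ge> 1\<close> obtain m where m: "n = Suc m" "m \<ge> 1"
        by (cases n) auto
      obtain R where "irreducible (P m)" "P n = sq_subst (P m)" "P n = P (Suc n) * R"
        "irreducible (P (Suc n))" "irreducible R"
        using splitting_sequence_split[OF sp \<open>m \<ge> 1\<close>] S m(1) by blast
      from sq_subst_factor_abs_coeffs[OF this(1) coeff_0[OF m(2)] _ this(4,5)] this(2,3)
      show ?thesis
        by (simp add: a_def abs_mult power_mult_distrib)
    qed
    show "a (Suc n) = a n" if "n \<ge> 1" and "\<not> string_is_S P n" for n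
      using that sp by (simp add: a_def splitting_sequence_def string_is_S_def)
    show "infinite {n. string_is_S P n}"
      using inf by (rule infinite_super[rotated]) blast
  qed
  then show "\<bar>lead_coeff (P 1)\<bar> = 1" and "\<bar>coeff (P 1) 0\<bar> = 1"
    unfolding a_def by (metis abs_zmult_eq_1 mult.commute)+
qed

theorem lemma3p13:
  fixes P :: "nat \<Rightarrow> int poly"
  assumes "splitting_sequence P"
    and "\<not> (\<exists>c k. P 1 = monom c k)"
  shows "(nice (P 1) \<longrightarrow> (\<forall>n\<ge>1. nice (P n) \<longleftrightarrow> irreducible (P n)))
       \<and> (infinite {n. n \<ge> 1 \<and> string_is_S P n} \<longrightarrow>
            nice (P 1) \<and> (\<forall>n\<ge>1. nice (P n) \<longleftrightarrow> irreducible (P n)))"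
proof -
  have irr: "irreducible (P 1)"
    using assms(1) by (simp add: splitting_sequence_def)
  have "nice (P 1)" if "infinite {n. n \<ge> 1 \<and> string_is_S P n}"
  proof -
    have "coeff (P 1) 0 \<noteq> 0"
      using irr assms(2) by (rule coeff_0_nonzero_if_irreducible_not_monom)
    from splitting_sequence_unit_coeffs_if_infinite_S[OF assms(1) this that] irr show ?thesis
      by (auto simp: nice_def abs_if split: if_splits)
  qed
  then show ?thesis
    using splitting_sequence_nice_iff_irreducible[OF assms(1)] by blast
qed

end
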